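(* In Algorithm 1 (described in the context), for every triplet $(\mathrm{dist},\mathrm{seed},v_0)$ popped from the priority queue $Q$ there is a path from $\mathrm{seed}$ to $v_0$ in $G$ of length $\mathrm{dist}$.
   Context: Algorithm 1 (geodesic $k$ nearest labeled neighbours). Input: an undirected graph $G=(V,E,w)$ with non-negative weights, a set $\mathcal L\subseteq V$ of labeled vertices, and an integer $k\ge1$. It maintains a min-priority queue $Q$ of pairs $(\mathrm{seed},v)\in\mathcal L\times V$ with priorities (a popped pair with priority $\mathrm{dist}$ is called the triplet $(\mathrm{dist},\mathrm{seed},v)$), and for each $v\in V$ a list kNN$[v]$ (initially empty) and a set $S_v$ (initially empty). Initially, for each $s\in\mathcal L$, $(s,s)$ is inserted with priority $0$. While $Q$ is nonempty: pop the pair $(\mathrm{seed},v_0)$ of minimum priority $\mathrm{dist}$; add $\mathrm{seed}$ to $S_{v_0}$; if kNN$[v_0]$ has fewer than $k$ entries, append $(\mathrm{dist},\mathrm{seed})$ to kNN$[v_0]$ and, for every neighbour $v$ of $v_0$ such that kNN$[v]$ has fewer than $k$ entries and $\mathrm{seed}\notin S_v$, perform decrease-or-insert of $(\mathrm{seed},v)$ with priority $\mathrm{dist}+w(v_0,v)$ (if the pair is in $Q$ its priority is lowered to this value when smaller; otherwise it is inserted). *)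

theory Defs
  imports Complex_Main
begin

record 'v knn_state =
  Qu   :: "('v \<times> 'v) \<Rightarrow> real option"   (* priority queue: pair (seed, v) -> priority *)
  kNN  :: "'v \<Rightarrow> (real \<times> 'v) list"
  Sset :: "'v \<Rightarrow> 'v set"

definition knn_init :: "'v set \<Rightarrow> 'v knn_state" where
  "knn_init L = \<lparr> Qu = (\<lambda>(s, v). if s \<in> L \<and> v = s then Some 0 else None),
                   kNN = (\<lambda>_. []), Sset = (\<lambda>_. {}) \<rparr>"

text \<open>The neighbour loop is order-independent (its guards only inspect kNN[v], S_v for
  neighbours v and the updated entries for v0), so it is performed simultaneously.\<close>
definition knn_step ::
  "('v \<times> 'v) set \<Rightarrow> ('v \<Rightarrow> 'v \<Rightarrow> real) \<Rightarrow> nat \<Rightarrow> 'v knn_state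
     \<Rightarrow> real \<times> 'v \<times> 'v \<Rightarrow> 'v knn_state \<Rightarrow> bool" where
  "knn_step E w k st t st' \<longleftrightarrow>
     (case t of (d, seed, v0) \<Rightarrow>
       Qu st (seed, v0) = Some d \<and>
       (\<forall>p d'. Qu st p = Some d' \<longrightarrow> d \<le> d') \<and>
       (let S' = (Sset st)(v0 := insert seed (Sset st v0)) in
        if length (kNN st v0) < k then
          (let K' = (kNN st)(v0 := kNN st v0 @ [(d, seed)]) in
           st' = \<lparr> Qu = (\<lambda>(s, v).
                      if (s, v) = (seed, v0) then None
                      else if s = seed \<and> (v0, v) \<in> E \<and> length (K' v) < k \<and> seed \<notin> S' v then
                        (case Qu st (s, v) of
                           None \<Rightarrow> Some (d + w v0 v)
                         | Some p \<Rightarrow> Some (min p (d + w v0 v)))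
                      else Qu st (s, v)),
                   kNN = K', Sset = S' \<rparr>)
        else
          st' = \<lparr> Qu = (Qu st)((seed, v0) := None), kNN = kNN st, Sset = S' \<rparr>))"

inductive knn_reachable ::
  "('v \<times> 'v) set \<Rightarrow> ('v \<Rightarrow> 'v \<Rightarrow> real) \<Rightarrow> 'v set \<Rightarrow> nat \<Rightarrow> 'v knn_state \<Rightarrow> bool"
  for E w L k where
  init: "knn_reachable E w L k (knn_init L)"
| step: "knn_reachable E w L k st \<Longrightarrow> knn_step E w k st t st' \<Longrightarrow> knn_reachable E w L k st'"

definition is_path :: "('v \<times> 'v) set \<Rightarrow> 'v \<Rightarrow> 'v \<Rightarrow> 'v list \<Rightarrow> bool" where
  "is_path E s t p \<longleftrightarrow> p \<noteq> [] \<and> hd p = s \<and> last p = t \<and> distinct p \<and>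
     (\<forall>i. Suc i < length p \<longrightarrow> (p ! i, p ! Suc i) \<in> E)"

definition path_length :: "('v \<Rightarrow> 'v \<Rightarrow> real) \<Rightarrow> 'v list \<Rightarrow> real" where
  "path_length w p = sum_list (map (\<lambda>(a, b). w a b) (zip p (tl p)))"

end

theory Submission
  imports Defs
begin

text \<open>Invariant: every queued pair (s, v) with priority d is witnessed by a path from s to v of
  length d all of whose vertices before v have already received s in their set S.  When (s, v0)
  is popped, s joins S_v0, so the whole witness path lies in S; a neighbour v with s \<notin> S_v is
  therefore not on it, and extending the path by v yields a path of length d + w v0 v.\<close>

definition queue_paths_invariant ::
  "('v \<times> 'v) set \<Rightarrow> ('v \<Rightarrow> 'v \<Rightarrow> real) \<Rightarrow> 'v knn_state \<Rightarrow> bool" where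
  "queue_paths_invariant E w st \<longleftrightarrow> (\<forall>s v d. Qu st (s, v) = Some d \<longrightarrow>
     (\<exists>p. is_path E s v p \<and> path_length w p = d \<and> (\<forall>x\<in>set (butlast p). s \<in> Sset st x)))"

lemma path_length_snoc:
  "p \<noteq> [] \<Longrightarrow> path_length w (p @ [v]) = path_length w p + w (last p) v"
  by (induction p rule: induct_list012) (auto simp: path_length_def)

lemma is_path_snoc:
  assumes p: "is_path E s u p" and "(u, v) \<in> E" and "v \<notin> set p"
  shows "is_path E s v (p @ [v])"
proof -
  have "p \<noteq> []" and last: "last p = u" using p by (auto simp: is_path_def)
  have "((p @ [v]) ! i, (p @ [v]) ! Suc i) \<in> E" if i: "Suc i < Suc (length p)" for i
  proof (cases "Suc i < length p")
    case True
    then show ?thesis using p by (simp add: is_path_def nth_append)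
  next
    case False
    with i \<open>p \<noteq> []\<close> have "i = length p - 1" "i < length p" by auto
    then show ?thesis using last \<open>p \<noteq> []\<close> \<open>(u, v) \<in> E\<close>
      by (simp add: nth_append last_conv_nth)
  qed
  then show ?thesis using p \<open>v \<notin> set p\<close> by (simp add: is_path_def)
qed

lemma knn_step_Sset:
  "knn_step E w k st (d, seed, v0) st' \<Longrightarrow>
     Sset st' = (Sset st)(v0 := insert seed (Sset st v0))"
  by (auto simp: knn_step_def Let_def split: if_splits)

lemma knn_step_popped:
  "knn_step E w k st (d, seed, v0) st' \<Longrightarrow> Qu st (seed, v0) = Some d"
  by (simp add: knn_step_def)

text \<open>A queue entry after a step is either an old entry or the relaxation of an edge out of v0;
  taking the minimum in decrease-or-insert returns one of the two.\<close>
lemma knn_step_Qu_cases: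
  assumes "knn_step E w k st (d, seed, v0) st'" and "Qu st' (s, v) = Some d'"
  shows "Qu st (s, v) = Some d' \<or>
    (s = seed \<and> (v0, v) \<in> E \<and> seed \<notin> Sset st' v \<and> d' = d + w v0 v)"
  using assms
  by (auto simp: knn_step_def Let_def min_def split: if_splits option.splits)

lemma queue_paths_invariant_init: "queue_paths_invariant E w (knn_init L)"
  unfolding queue_paths_invariant_def knn_init_def
  by (auto split: if_splits intro!: exI[of _ "[_]"] simp: is_path_def path_length_def)

lemma queue_paths_invariant_step:
  assumes inv: "queue_paths_invariant E w st"
    and step: "knn_step E w k st (d, seed, v0) st'"
  shows "queue_paths_invariant E w st'"
  unfolding queue_paths_invariant_def
proof (intro allI impI)
  have S': "Sset st' = (Sset st)(v0 := insert seed (Sset st v0))"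
    using step by (rule knn_step_Sset)
  then have S_mono: "Sset st x \<subseteq> Sset st' x" for x by auto
  fix s v d' assume q': "Qu st' (s, v) = Some d'"
  from knn_step_Qu_cases[OF step q'] show
    "\<exists>p. is_path E s v p \<and> path_length w p = d' \<and> (\<forall>x\<in>set (butlast p). s \<in> Sset st' x)"
  proof
    assume "Qu st (s, v) = Some d'"
    then show ?thesis using inv S_mono unfolding queue_paths_invariant_def by blast
  next
    assume new: "s = seed \<and> (v0, v) \<in> E \<and> seed \<notin> Sset st' v \<and> d' = d + w v0 v"
    obtain p where p: "is_path E seed v0 p" "path_length w p = d"
      and before: "\<forall>x\<in>set (butlast p). seed \<in> Sset st x"
      using inv knn_step_popped[OF step] unfolding queue_paths_invariant_def by blast
    have "p \<noteq> []" and "last p = v0" using p(1) by (auto simp: is_path_def)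
    then have "set p = insert v0 (set (butlast p))"
      by (metis append_butlast_last_id set_append empty_set list.simps(15) Un_insert_right
          sup_bot.right_neutral)
    with before S_mono have on_path: "\<forall>x\<in>set p. seed \<in> Sset st' x"
      by (auto simp: S')
    with new have "v \<notin> set p" by blast
    with new p \<open>p \<noteq> []\<close> \<open>last p = v0\<close> on_path show ?thesis
      by (intro exI[of _ "p @ [v]"]) (simp add: is_path_snoc path_length_snoc)
  qed
qed

lemma knn_reachable_queue_paths_invariant:
  "knn_reachable E w L k st \<Longrightarrow> queue_paths_invariant E w st"
  by (induction rule: knn_reachable.induct)
    (auto intro: queue_paths_invariant_init queue_paths_invariant_step)

theorem lemmaB2:
  fixes V L :: "'v set" and E :: "('v \<times> 'v) set" and w :: "'v \<Rightarrow> 'v \<Rightarrow> real" and k :: nat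
  assumes "E \<subseteq> V \<times> V" and "sym E"
    and "\<forall>u v. (u, v) \<in> E \<longrightarrow> 0 \<le> w u v \<and> w u v = w v u"
    and "L \<subseteq> V" and "1 \<le> k"
    and "knn_reachable E w L k st"
    and "knn_step E w k st (d, seed, v0) st'"
  shows "\<exists>p. is_path E seed v0 p \<and> path_length w p = d"
proof -
  have "queue_paths_invariant E w st"
    using assms(6) by (rule knn_reachable_queue_paths_invariant)
  moreover have "Qu st (seed, v0) = Some d"
    using assms(7) by (rule knn_step_popped)
  ultimately show ?thesis unfolding queue_paths_invariant_def by blast
qed

end
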